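(* In the setting of the context, consider a Case 3 spacetime ($\partial_v r_-<0$). Radially outgoing null geodesics initially located between the inner and outer AHs, or on the inner AH, never intersect the inner AH at any later time.
   Context: Spherically symmetric spacetime $ds^2=-f(v,r)A(v,r)^2dv^2+2A(v,r)\,dr\,dv+r^2d\Omega^2$ with $A>0$, $f,A\to1$ as $r\to\infty$, $f(v,0)=1$, $\partial_rf(v,0)=\partial_rA(v,0)=0$; $f(v,\cdot)$ has exactly two zeros $r_+(v)>r_-(v)$ (outer/inner apparent horizons, AHs), $f=F(r-r_+)(r-r_-)$ with $F>0$, and $h=AF>0$. Assumptions: $\partial_v r_+<0$; $r_\pm(v)\to r_c$ as $v\to\infty$; the sign of $\partial_v r_-$ is constant; the $v\to\infty$ limits of $A,F,h$ behave as analytic functions of $r$, so all $\partial_r^n h$ converge as $v\to\infty$. With $x=r-r_c$, $x_\pm=r_\pm-r_c$ and $h$ regarded as a function of $(v,x)$, radially outgoing null geodesics solve $dx/dv=\tfrac12h(v,x)(x-x_+(v))(x-x_-(v))$. *)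

theory Defs
  imports "HOL-Analysis.Analysis"
begin

end

theory Submission
  imports Defs
begin

text \<open>Where the geodesic meets the inner horizon the factor \<open>x - x\<^sub>-\<close> of the geodesic
  equation vanishes, so \<open>x - x\<^sub>-\<close> has derivative \<open>- \<partial>\<^sub>v x\<^sub>-\<close> there, which is positive in
  Case 3; nothing else about \<open>h\<close> or the outer horizon is needed. A continuous function that
  meets zero only with positive slope stays positive once it is nonnegative: a last zero before
  a negative value would be followed by positive values and hence by another zero.\<close>

lemma has_real_derivative_pos_exceeds_right:
  fixes f :: "real \<Rightarrow> real"
  assumes "(f has_real_derivative D) (at z within {z..c})" "D > 0" "z < c"
  shows "\<exists>t\<in>{z<..<c}. f z < f t"
proof -
  obtain d where "d > 0" and inc: "\<And>h. h > 0 \<Longrightarrow> z + h \<in> {z..c} \<Longrightarrow> h < d \<Longrightarrow> f z < f (z + h)"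
    using has_real_derivative_pos_inc_right[OF assms(1,2)] by blast
  define h where "h = min (d/2) ((c - z)/2)"
  have "h > 0" "h < d" "z + h < c"
    using \<open>d > 0\<close> \<open>z < c\<close> by (auto simp: h_def min_def field_simps)
  with inc[of h] show ?thesis by (intro bexI[of _ "z + h"]) auto
qed

lemma has_real_derivative_pos_exceeds_left:
  fixes f :: "real \<Rightarrow> real"
  assumes "(f has_real_derivative D) (at z within {c..z})" "D > 0" "c < z"
  shows "\<exists>t\<in>{c<..<z}. f t < f z"
proof -
  obtain d where "d > 0" and inc: "\<And>h. h > 0 \<Longrightarrow> z - h \<in> {c..z} \<Longrightarrow> h < d \<Longrightarrow> f (z - h) < f z"
    using has_real_derivative_pos_inc_left[OF assms(1,2)] by blast
  define h where "h = min (d/2) ((z - c)/2)"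
  have "h > 0" "h < d" "c < z - h"
    using \<open>d > 0\<close> \<open>c < z\<close> by (auto simp: h_def min_def field_simps)
  with inc[of h] show ?thesis by (intro bexI[of _ "z - h"]) auto
qed

lemma nonneg_if_zeros_cross_upward:
  fixes g :: "real \<Rightarrow> real"
  assumes cont: "continuous_on {a..b} g"
    and up: "\<And>t. t \<in> {a..b} \<Longrightarrow> g t = 0 \<Longrightarrow>
      \<exists>D>0. (g has_real_derivative D) (at t within {a..b})"
    and "a \<le> b" and "g a \<ge> 0"
  shows "g b \<ge> 0"
proof (rule ccontr)
  assume "\<not> g b \<ge> 0"
  then have "g b < 0" by simp
  define Z where "Z = {t \<in> {a..b}. g t = 0}"
  have "Z \<noteq> {}"
    using IVT2'[of g b 0 a] cont \<open>g b < 0\<close> \<open>g a \<ge> 0\<close> \<open>a \<le> b\<close> by (force simp: Z_def)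
  moreover have "closed Z"
    unfolding Z_def by (rule continuous_closed_preimage_constant[OF cont]) simp
  moreover have "bdd_above Z"
    by (auto simp: Z_def bdd_above_def)
  ultimately have "Sup Z \<in> Z" and last_zero: "\<And>t. t \<in> Z \<Longrightarrow> t \<le> Sup Z"
    by (auto intro: closed_contains_Sup cSup_upper)
  define z where "z = Sup Z"
  have "z \<in> {a..b}" "g z = 0"
    using \<open>Sup Z \<in> Z\<close> by (auto simp: z_def Z_def)
  with \<open>g b < 0\<close> have "z < b" by (cases "z = b") auto
  obtain D where "D > 0" and "(g has_real_derivative D) (at z within {a..b})"
    using up[OF \<open>z \<in> {a..b}\<close> \<open>g z = 0\<close>] by blast
  then have "(g has_real_derivative D) (at z within {z..b})"
    using \<open>z \<in> {a..b}\<close> by (auto intro: DERIV_subset)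
  from has_real_derivative_pos_exceeds_right[OF this \<open>D > 0\<close> \<open>z < b\<close>] \<open>g z = 0\<close>
  obtain z' where z': "z < z'" "z' < b" "g z' > 0"
    by auto
  have "continuous_on {z'..b} g"
    using \<open>z \<in> {a..b}\<close> z' by (auto intro: continuous_on_subset[OF cont])
  then obtain t where "z' \<le> t" "t \<le> b" "g t = 0"
    using IVT2'[of g b 0 z'] \<open>g b < 0\<close> z' by force
  then have "t \<in> Z"
    using \<open>z \<in> {a..b}\<close> z' by (auto simp: Z_def)
  with last_zero[of t] \<open>z' \<le> t\<close> z' show False by (simp add: z_def)
qed

lemma pos_if_zeros_cross_upward:
  fixes g :: "real \<Rightarrow> real"
  assumes cont: "continuous_on {a..b} g"
    and up: "\<And>t. t \<in> {a..b} \<Longrightarrow> g t = 0 \<Longrightarrow>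
      \<exists>D>0. (g has_real_derivative D) (at t within {a..b})"
    and "a < b" and "g a \<ge> 0"
  shows "g b > 0"
proof (rule ccontr)
  assume "\<not> g b > 0"
  moreover have "g b \<ge> 0"
    using nonneg_if_zeros_cross_upward[OF cont up] \<open>a < b\<close> \<open>g a \<ge> 0\<close> by simp
  ultimately have "g b = 0" by simp
  moreover have "b \<in> {a..b}"
    using \<open>a < b\<close> by simp
  ultimately obtain D where "D > 0" and "(g has_real_derivative D) (at b within {a..b})"
    using up by blast
  from has_real_derivative_pos_exceeds_left[OF this(2) this(1) \<open>a < b\<close>] \<open>g b = 0\<close>
  obtain s where s: "a < s" "s < b" "g s < 0"
    by auto
  have "g s \<ge> 0"
  proof (rule nonneg_if_zeros_cross_upward[of a s g])
    show "continuous_on {a..s} g"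
      using s by (auto intro: continuous_on_subset[OF cont])
    fix t assume "t \<in> {a..s}" "g t = 0"
    with s obtain D where "D > 0" "(g has_real_derivative D) (at t within {a..b})"
      using up[of t] by auto
    moreover have "{a..s} \<subseteq> {a..b}"
      using s by auto
    ultimately show "\<exists>D>0. (g has_real_derivative D) (at t within {a..s})"
      by (blast intro: DERIV_subset)
  qed (use s \<open>g a \<ge> 0\<close> in auto)
  with s show False by simp
qed

theorem lemma6:
  fixes h :: "real \<Rightarrow> real \<Rightarrow> real"
    and xp xm xp' xm' :: "real \<Rightarrow> real"
    and x :: "real \<Rightarrow> real" and I :: "real set" and v0 :: real
  assumes h_pos: "\<And>v y. h v y > 0"
    and h_cont: "continuous_on UNIV (\<lambda>(v, y). h v y)"
    and xp_deriv: "\<And>v. (xp has_real_derivative xp' v) (at v)"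
    and xm_deriv: "\<And>v. (xm has_real_derivative xm' v) (at v)"
    and order: "\<And>v. xm v < xp v"
    and outer_shrinks: "\<And>v. xp' v < 0"
    and case3: "\<And>v. xm' v < 0"
    and xp_lim: "(xp \<longlongrightarrow> 0) at_top"
    and xm_lim: "(xm \<longlongrightarrow> 0) at_top"
    and I_int: "is_interval I" and v0_in: "v0 \<in> I"
    and geodesic: "\<And>v. v \<in> I \<Longrightarrow>
        (x has_real_derivative (1/2) * h v (x v) * (x v - xp v) * (x v - xm v)) (at v within I)"
    and init: "xm v0 \<le> x v0" "x v0 < xp v0"
  shows "\<forall>v\<in>I. v > v0 \<longrightarrow> x v \<noteq> xm v"
proof (intro ballI impI)
  fix v1 assume "v1 \<in> I" "v0 < v1"
  define g where "g = (\<lambda>v. x v - xm v)"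
  have sub: "{v0..v1} \<subseteq> I"
    using I_int v0_in \<open>v1 \<in> I\<close> unfolding is_interval_1 by (meson atLeastAtMost_iff subsetI)
  have g_deriv: "(g has_real_derivative
      (1/2) * h t (x t) * (x t - xp t) * (x t - xm t) - xm' t) (at t within {v0..v1})"
    if "t \<in> {v0..v1}" for t
    using DERIV_diff[OF geodesic has_field_derivative_at_within[OF xm_deriv], of t] sub that
    unfolding g_def by (blast intro: DERIV_subset)
  have "continuous_on {v0..v1} g"
    unfolding continuous_on_eq_continuous_within using g_deriv by (blast intro: DERIV_continuous)
  moreover have "\<exists>D>0. (g has_real_derivative D) (at t within {v0..v1})"
    if "t \<in> {v0..v1}" "g t = 0" for t
    using g_deriv[OF that(1)] that(2) case3[of t]
    by (intro exI[of _ "- xm' t"]) (auto simp: g_def)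
  ultimately have "g v1 > 0"
    using \<open>v0 < v1\<close> init(1) by (intro pos_if_zeros_cross_upward[of v0 v1 g]) (auto simp: g_def)
  then show "x v1 \<noteq> xm v1"
    by (simp add: g_def)
qed

end
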